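(* Let $G$ be a countable infinite discrete group, $X$ an infinite compact Hausdorff space and $\beta: G\curvearrowright X$ a minimal, topologically free continuous action with no $G$-invariant regular Borel probability measure and with dynamical comparison. Let $Y$ be a compact Hausdorff space and $\alpha: G\curvearrowright X\times Y$ the action $\alpha_g(x,y)=(\beta_g(x),y)$. Then $\alpha$ has paradoxical comparison.
   Context: Subequivalence for an action of $G$ on a space $Z$: for closed $F$ and open $O$ in $Z$, $F\prec O$ if there exist a finite open cover $\mathcal{U}$ of $F$ and $s_U\in G$ with the sets $s_UU$ pairwise disjoint subsets of $O$; for open $V$, $V\prec O$ means $F\prec O$ for all closed $F\subset V$. Dynamical comparison (for $\beta$): $V\prec O$ for every open $V$ and nonempty open $O$ in $X$ with $\mu(V)<\mu(O)$ for all $G$-invariant regular Borel probability measures $\mu$. Topologically free: fixed point sets of non-identity elements have empty interior. Paradoxical comparison (for $\alpha$): for every nonempty open $O\subset X\times Y$ and closed $F\subset O$ there are disjoint nonempty open $O_1,O_2\subset O$ with $F\prec O_1$, $F\prec O_2$. *)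

theory Defs
  imports "HOL-Probability.Probability"
begin

text \<open>Group actions of a group (type class group_add, written additively, not
assumed commutative) on a topological space by homeomorphisms.\<close>

definition continuous_action :: "('g::group_add \<Rightarrow> 'a::topological_space \<Rightarrow> 'a) \<Rightarrow> bool" where
  "continuous_action act \<longleftrightarrow>
     act 0 = id \<and> (\<forall>g h. act (g + h) = act g \<circ> act h) \<and> (\<forall>g. continuous_on UNIV (act g))"

definition minimal_action :: "('g::group_add \<Rightarrow> 'a::topological_space \<Rightarrow> 'a) \<Rightarrow> bool" where
  "minimal_action act \<longleftrightarrow> (\<forall>x. closure (range (\<lambda>g. act g x)) = UNIV)"

definition topologically_free :: "('g::group_add \<Rightarrow> 'a::topological_space \<Rightarrow> 'a) \<Rightarrow> bool" where
  "topologically_free act \<longleftrightarrow> (\<forall>g. g \<noteq> 0 \<longrightarrow> interior {x. act g x = x} = {})"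

definition regular_borel_prob :: "'a::topological_space measure \<Rightarrow> bool" where
  "regular_borel_prob M \<longleftrightarrow> sets M = sets borel \<and> prob_space M \<and>
     (\<forall>A \<in> sets borel.
        measure M A = (INF U \<in> {U. open U \<and> A \<subseteq> U}. measure M U) \<and>
        measure M A = (SUP K \<in> {K. compact K \<and> K \<subseteq> A}. measure M K))"

definition invariant_measure :: "('g \<Rightarrow> 'a::topological_space \<Rightarrow> 'a) \<Rightarrow> 'a measure \<Rightarrow> bool" where
  "invariant_measure act M \<longleftrightarrow> (\<forall>g. \<forall>A \<in> sets borel. measure M (act g -` A) = measure M A)"

definition inv_reg_prob :: "('g \<Rightarrow> 'a::topological_space \<Rightarrow> 'a) \<Rightarrow> 'a measure \<Rightarrow> bool" where
  "inv_reg_prob act M \<longleftrightarrow> regular_borel_prob M \<and> invariant_measure act M"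

definition subeq_closed :: "('g \<Rightarrow> 'a \<Rightarrow> 'a::topological_space) \<Rightarrow> 'a set \<Rightarrow> 'a set \<Rightarrow> bool" where
  "subeq_closed act F W \<longleftrightarrow>
     (\<exists>Us (s :: 'a set \<Rightarrow> 'g). finite Us \<and> (\<forall>U\<in>Us. open U) \<and> F \<subseteq> \<Union>Us \<and>
        (\<forall>U\<in>Us. act (s U) ` U \<subseteq> W) \<and>
        (\<forall>U\<in>Us. \<forall>U'\<in>Us. U \<noteq> U' \<longrightarrow> act (s U) ` U \<inter> act (s U') ` U' = {}))"

definition subeq_open :: "('g \<Rightarrow> 'a \<Rightarrow> 'a::topological_space) \<Rightarrow> 'a set \<Rightarrow> 'a set \<Rightarrow> bool" where
  "subeq_open act V W \<longleftrightarrow> (\<forall>F. closed F \<and> F \<subseteq> V \<longrightarrow> subeq_closed act F W)"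

definition dynamical_comparison :: "('g \<Rightarrow> 'a \<Rightarrow> 'a::topological_space) \<Rightarrow> bool" where
  "dynamical_comparison act \<longleftrightarrow>
     (\<forall>V W. open V \<and> open W \<and> W \<noteq> {} \<and>
        (\<forall>M. inv_reg_prob act M \<longrightarrow> measure M V < measure M W) \<longrightarrow> subeq_open act V W)"

definition paradoxical_comparison :: "('g \<Rightarrow> 'a \<Rightarrow> 'a::topological_space) \<Rightarrow> bool" where
  "paradoxical_comparison act \<longleftrightarrow>
     (\<forall>W F. open W \<and> W \<noteq> {} \<and> closed F \<and> F \<subseteq> W \<longrightarrow>
        (\<exists>W1 W2. open W1 \<and> open W2 \<and> W1 \<noteq> {} \<and> W2 \<noteq> {} \<and> W1 \<subseteq> W \<and> W2 \<subseteq> W \<and>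
           W1 \<inter> W2 = {} \<and> subeq_closed act F W1 \<and> subeq_closed act F W2))"

end

theory Submission
  imports Defs
begin

text \<open>Without invariant measures the measure condition in dynamical comparison is vacuous,
  so \<open>X \<prec> D\<close> for every nonempty open \<open>D \<subseteq> X\<close>. Cover the closed set \<open>F\<close> by finitely many open
  boxes \<open>A\<^sub>i \<times> B\<^sub>i \<subseteq> O\<close>. A minimal action on an infinite compact space has no isolated points,
  so the \<open>A\<^sub>i\<close> contain pairwise disjoint nonempty open sets \<open>C\<^sub>i\<^sub>,\<^sub>1, C\<^sub>i\<^sub>,\<^sub>2\<close>. Moving all of \<open>X\<close>
  into \<open>C\<^sub>i\<^sub>,\<^sub>t\<close> while keeping the \<open>Y\<close>-coordinate fixed shows \<open>F \<prec> \<Union>\<^sub>i C\<^sub>i\<^sub>,\<^sub>t \<times> B\<^sub>i\<close> for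
  \<open>t = 1, 2\<close>.\<close>

definition subeq_witness :: "('g \<Rightarrow> 'a \<Rightarrow> 'a::topological_space) \<Rightarrow> 'a set \<Rightarrow> 'a set \<Rightarrow> 'a set set \<Rightarrow> ('a set \<Rightarrow> 'g) \<Rightarrow> bool" where
  "subeq_witness act F W Us s \<longleftrightarrow> finite Us \<and> (\<forall>U\<in>Us. open U) \<and> F \<subseteq> \<Union>Us \<and>
     (\<forall>U\<in>Us. act (s U) ` U \<subseteq> W) \<and>
     (\<forall>U\<in>Us. \<forall>U'\<in>Us. U \<noteq> U' \<longrightarrow> act (s U) ` U \<inter> act (s U') ` U' = {})"

lemma subeq_closed_iff_witness: "subeq_closed act F W \<longleftrightarrow> (\<exists>Us s. subeq_witness act F W Us s)"
  unfolding subeq_closed_def subeq_witness_def ..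

lemma subeq_closedI:
  assumes "finite J" "\<And>j. j \<in> J \<Longrightarrow> open (V j)" "F \<subseteq> (\<Union>j\<in>J. V j)"
    "\<And>j. j \<in> J \<Longrightarrow> act (t j) ` V j \<subseteq> W"
    "\<And>i j. i \<in> J \<Longrightarrow> j \<in> J \<Longrightarrow> i \<noteq> j \<Longrightarrow> act (t i) ` V i \<inter> act (t j) ` V j = {}"
  shows "subeq_closed act F W"
proof -
  define s where "s = (\<lambda>U. t (SOME j. j \<in> J \<and> V j = U))"
  have s: "\<exists>j\<in>J. V j = U \<and> s U = t j" if "U \<in> V ` J" for U
    unfolding s_def using that by (metis (mono_tags, lifting) imageE someI)
  have "subeq_witness act F W (V ` J) s"
    unfolding subeq_witness_def
  proof (intro conjI ballI impI)
    fix U assume "U \<in> V ` J"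
    then show "act (s U) ` U \<subseteq> W"
      using s assms(4) by metis
  next
    fix U U' assume "U \<in> V ` J" "U' \<in> V ` J" "U \<noteq> U'"
    then show "act (s U) ` U \<inter> act (s U') ` U' = {}"
      using s assms(5) by metis
  qed (use assms(1-3) in auto)
  then show ?thesis
    unfolding subeq_closed_iff_witness by blast
qed

lemma subeq_closed_mono:
  assumes "subeq_closed act F W" "F' \<subseteq> F" "W \<subseteq> W'"
  shows "subeq_closed act F' W'"
proof -
  obtain Us s where "subeq_witness act F W Us s"
    using assms(1) subeq_closed_iff_witness by blast
  then have "subeq_witness act F' W' Us s"
    using assms(2,3) unfolding subeq_witness_def by (meson subset_trans)
  then show ?thesis
    unfolding subeq_closed_iff_witness by blast
qed

lemma subeq_closed_UN:
  assumes "finite I" "\<And>i. i \<in> I \<Longrightarrow> subeq_closed act (F i) (W i)" "disjoint_family_on W I"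
  shows "subeq_closed act (\<Union>i\<in>I. F i) (\<Union>i\<in>I. W i)"
proof -
  have "\<forall>i\<in>I. \<exists>w. subeq_witness act (F i) (W i) (fst w) (snd w)"
    using assms(2) unfolding subeq_closed_iff_witness by simp
  from bchoice[OF this] obtain w where
    w: "\<And>i. i \<in> I \<Longrightarrow> subeq_witness act (F i) (W i) (fst (w i)) (snd (w i))"
    by blast
  define Us where "Us i = fst (w i)" for i
  define s where "s i = snd (w i)" for i
  have Us: "finite (Us i)" "\<And>U. U \<in> Us i \<Longrightarrow> open U" "F i \<subseteq> \<Union>(Us i)"
    "\<And>U. U \<in> Us i \<Longrightarrow> act (s i U) ` U \<subseteq> W i"
    "\<And>U U'. U \<in> Us i \<Longrightarrow> U' \<in> Us i \<Longrightarrow> U \<noteq> U' \<Longrightarrow> act (s i U) ` U \<inter> act (s i U') ` U' = {}"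
    if "i \<in> I" for i
    using w[OF that] unfolding subeq_witness_def Us_def s_def by blast+
  show ?thesis
  proof (rule subeq_closedI[where J = "Sigma I Us" and V = snd and t = "\<lambda>(i, U). s i U"])
    fix j j' assume j: "j \<in> Sigma I Us" "j' \<in> Sigma I Us" "j \<noteq> j'"
    then obtain i U i' U' where ij: "j = (i, U)" "j' = (i', U')" "i \<in> I" "i' \<in> I"
      "U \<in> Us i" "U' \<in> Us i'"
      by blast
    show "act ((\<lambda>(i, U). s i U) j) ` snd j \<inter> act ((\<lambda>(i, U). s i U) j') ` snd j' = {}"
    proof (cases "i = i'")
      case True
      then show ?thesis
        using Us(5)[of i U U'] ij j(3) by auto
    next
      case False
      then have "W i \<inter> W i' = {}"
        using assms(3) ij unfolding disjoint_family_on_def by blast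
      then show ?thesis
        using Us(4)[of i U] Us(4)[of i' U'] ij by auto
    qed
  next
    show "(\<Union>i\<in>I. F i) \<subseteq> (\<Union>j\<in>Sigma I Us. snd j)"
      using Us(3) by fastforce
  next
    fix j assume "j \<in> Sigma I Us"
    then show "act ((\<lambda>(i, U). s i U) j) ` snd j \<subseteq> (\<Union>i\<in>I. W i)"
      using Us(4) by fastforce
  qed (use assms(1) Us(1,2) in auto)
qed

lemma subeq_closed_Times:
  assumes "\<And>g x y. \<alpha> g (x, y) = (\<beta> g x, y)" "subeq_closed \<beta> K C" "open B"
  shows "subeq_closed \<alpha> (K \<times> B) (C \<times> B)"
proof -
  have image: "\<alpha> g ` (U \<times> B) = \<beta> g ` U \<times> B" for g U
    using assms(1) by (force simp: image_iff)
  obtain Us s where w: "subeq_witness \<beta> K C Us s"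
    using assms(2) subeq_closed_iff_witness by blast
  show ?thesis
  proof (rule subeq_closedI[where J = Us and V = "\<lambda>U. U \<times> B" and t = s])
    fix U assume "U \<in> Us"
    then have "\<beta> (s U) ` U \<subseteq> C"
      using w unfolding subeq_witness_def by blast
    then show "\<alpha> (s U) ` (U \<times> B) \<subseteq> C \<times> B"
      unfolding image by blast
  next
    fix U U' assume "U \<in> Us" "U' \<in> Us" "U \<noteq> U'"
    then have "\<beta> (s U) ` U \<inter> \<beta> (s U') ` U' = {}"
      using w unfolding subeq_witness_def by blast
    then show "\<alpha> (s U) ` (U \<times> B) \<inter> \<alpha> (s U') ` (U' \<times> B) = {}"
      unfolding image by blast
  qed (use w assms(3) in \<open>auto simp: subeq_witness_def open_Times\<close>)
qed

lemma subeq_closed_UN_Times: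
  assumes "\<And>g x y. \<alpha> g (x, y) = (\<beta> g x, y)" "finite I"
    "\<And>i. i \<in> I \<Longrightarrow> subeq_closed \<beta> UNIV (C i)" "\<And>i. i \<in> I \<Longrightarrow> open (B i)"
    "disjoint_family_on C I" "F \<subseteq> UNIV \<times> (\<Union>i\<in>I. B i)"
  shows "subeq_closed \<alpha> F (\<Union>i\<in>I. C i \<times> B i)"
proof -
  have disjoint: "disjoint_family_on (\<lambda>i. C i \<times> B i) I"
    using assms(5) unfolding disjoint_family_on_def by blast
  have "subeq_closed \<alpha> (\<Union>i\<in>I. UNIV \<times> B i) (\<Union>i\<in>I. C i \<times> B i)"
    by (rule subeq_closed_UN[OF assms(2) _ disjoint]) (intro subeq_closed_Times[OF assms(1)] assms(3,4))
  then show ?thesis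
    by (rule subeq_closed_mono) (use assms(6) in auto)
qed

lemma subeq_closed_UNIV_if_no_invariant_measure:
  assumes "dynamical_comparison act" "\<nexists>M. inv_reg_prob act M" "open D" "D \<noteq> {}"
  shows "subeq_closed act UNIV D"
  using assms unfolding dynamical_comparison_def subeq_open_def by blast

lemma continuous_action_inverse:
  assumes "continuous_action act"
  shows "act (- g) (act g x) = x"
  using assms unfolding continuous_action_def by (metis add.left_inverse comp_apply id_apply)

lemma minimal_action_no_isolated_points:
  fixes act :: "'g::group_add \<Rightarrow> 'x::topological_space \<Rightarrow> 'x" and x :: 'x
  assumes "compact (UNIV :: 'x set)" "infinite (UNIV :: 'x set)"
    "continuous_action act" "minimal_action act"
  shows "\<not> open {x}"
proof
  assume "open {x}"
  have "open {y}" for y :: 'x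
  proof -
    have "x \<in> closure (range (\<lambda>g. act g y))"
      using assms(4) unfolding minimal_action_def by auto
    then obtain g where g: "act g y = x"
      using open_Int_closure_eq_empty[OF \<open>open {x}\<close>] by blast
    moreover have "z = y" if "act g z = x" for z
      using continuous_action_inverse[OF assms(3), of g] that g by metis
    ultimately have "act g -` {x} = {y}"
      by blast
    moreover have "continuous_on UNIV (act g)"
      using assms(3) unfolding continuous_action_def by blast
    ultimately show "open {y}"
      using \<open>open {x}\<close> open_vimage by metis
  qed
  then obtain C where "finite C" "UNIV \<subseteq> (\<Union>c\<in>C. {c :: 'x})"
    using compactE_image[OF assms(1), of UNIV "\<lambda>c. {c}"] by blast
  then show False
    using assms(2) by (metis UN_singleton finite_subset)
qed

lemma open_infinite_if_no_isolated_points: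
  fixes U :: "'a::t1_space set"
  assumes "\<And>x::'a. \<not> open {x}" "open U" "U \<noteq> {}"
  shows "infinite U"
proof
  assume "finite U"
  obtain x where "x \<in> U"
    using assms(3) by blast
  then have "{x} = U - (U - {x})"
    by blast
  moreover have "closed (U - {x})"
    using \<open>finite U\<close> by (simp add: finite_imp_closed)
  ultimately show False
    using assms(1,2) by (metis open_Diff)
qed

lemma finite_points_disjoint_open_nhds:
  fixes P :: "'a::t2_space set"
  assumes "finite P"
  shows "\<exists>N. (\<forall>x\<in>P. open (N x) \<and> x \<in> N x) \<and> disjoint_family_on N P"
  using assms
proof (induction P rule: finite_induct)
  case empty
  then show ?case by (simp add: disjoint_family_on_def)
next
  case (insert q P)
  then obtain N where N: "\<forall>x\<in>P. open (N x) \<and> x \<in> N x" "disjoint_family_on N P"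
    by blast
  have "\<exists>UV. open (fst UV) \<and> open (snd UV) \<and> q \<in> fst UV \<and> x \<in> snd UV \<and> fst UV \<inter> snd UV = {}"
    if "x \<in> P" for x
  proof -
    have "q \<noteq> x"
      using that insert.hyps(2) by blast
    then obtain U V where "open U" "open V" "q \<in> U" "x \<in> V" "U \<inter> V = {}"
      using hausdorff[OF \<open>q \<noteq> x\<close>] by blast
    then show ?thesis
      by (intro exI[of _ "(U, V)"]) simp
  qed
  then obtain UV where UV: "\<And>x. x \<in> P \<Longrightarrow>
      open (fst (UV x)) \<and> open (snd (UV x)) \<and> q \<in> fst (UV x) \<and> x \<in> snd (UV x) \<and> fst (UV x) \<inter> snd (UV x) = {}"
    by metis
  define N' where "N' x = (if x = q then (\<Inter>y\<in>P. fst (UV y)) else N x \<inter> snd (UV x))" for x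
  have "open (N' x) \<and> x \<in> N' x" if "x \<in> insert q P" for x
  proof (cases "x = q")
    case True
    then show ?thesis
      unfolding N'_def using UV insert.hyps(1) by (auto intro: open_INT)
  next
    case False
    then show ?thesis
      unfolding N'_def using UV N(1) that by auto
  qed
  moreover have "N' x \<inter> N' y = {}" if "x \<in> insert q P" "y \<in> insert q P" "x \<noteq> y" for x y
  proof -
    have qP: "N' q \<inter> N' z = {}" if "z \<in> P" for z
    proof -
      have "N' q \<subseteq> fst (UV z)" "N' z \<subseteq> snd (UV z)"
        unfolding N'_def using that insert.hyps(2) by auto
      then show ?thesis
        using UV[OF that] by blast
    qed
    show ?thesis
    proof (cases "x = q \<or> y = q")
      case True
      then show ?thesis
        using qP that by blast
    next
      case False
      then have "N x \<inter> N y = {}"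
        using N(2) that unfolding disjoint_family_on_def by blast
      then show ?thesis
        unfolding N'_def using False by auto
    qed
  qed
  ultimately show ?case
    unfolding disjoint_family_on_def by blast
qed

lemma distinct_representatives_of_infinite_sets:
  assumes "finite I" "\<And>i. i \<in> I \<Longrightarrow> infinite (A i)"
  shows "\<exists>p. inj_on p I \<and> (\<forall>i\<in>I. p i \<in> A i)"
  using assms
proof (induction I rule: finite_induct)
  case empty
  then show ?case by simp
next
  case (insert k I)
  then obtain p where p: "inj_on p I" "\<forall>i\<in>I. p i \<in> A i"
    by blast
  have "infinite (A k - p ` I)"
    using insert.prems insert.hyps(1) by (simp add: Diff_infinite_finite)
  then obtain a where "a \<in> A k" "a \<notin> p ` I"
    by (metis Diff_iff ex_in_conv finite.emptyI)
  then have "inj_on (p(k := a)) (insert k I) \<and> (\<forall>i\<in>insert k I. (p(k := a)) i \<in> A i)"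
    using p insert.hyps(2) by (auto simp: inj_on_def)
  then show ?case
    by blast
qed

lemma disjoint_open_subsets:
  fixes A :: "'i \<Rightarrow> 'a::t2_space set"
  assumes "\<And>x::'a. \<not> open {x}" "finite I" "\<And>i. i \<in> I \<Longrightarrow> open (A i) \<and> A i \<noteq> {}"
  obtains C where "\<And>i. i \<in> I \<Longrightarrow> open (C i) \<and> C i \<noteq> {} \<and> C i \<subseteq> A i"
    "disjoint_family_on C I"
proof -
  obtain p where p: "inj_on p I" "\<forall>i\<in>I. p i \<in> A i"
    using distinct_representatives_of_infinite_sets[OF assms(2)]
      open_infinite_if_no_isolated_points[OF assms(1)] assms(3) by metis
  obtain N where N: "\<forall>x\<in>p ` I. open (N x) \<and> x \<in> N x" "disjoint_family_on N (p ` I)"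
    using finite_points_disjoint_open_nhds[of "p ` I"] assms(2) by blast
  show ?thesis
  proof
    show "open (A i \<inter> N (p i)) \<and> A i \<inter> N (p i) \<noteq> {} \<and> A i \<inter> N (p i) \<subseteq> A i" if "i \<in> I" for i
      using assms(3) N(1) p(2) that by blast
    show "disjoint_family_on (\<lambda>i. A i \<inter> N (p i)) I"
      using N(2) p(1) unfolding disjoint_family_on_def inj_on_def by blast
  qed
qed

lemma compact_cover_by_open_boxes:
  fixes W :: "('a::topological_space \<times> 'b::topological_space) set"
  assumes "compact F" "open W" "F \<subseteq> W" "W \<noteq> {}"
  obtains I where "finite I" "I \<noteq> {}"
    "\<And>b. b \<in> I \<Longrightarrow> open (fst b) \<and> open (snd b) \<and> fst b \<noteq> {} \<and> snd b \<noteq> {} \<and> fst b \<times> snd b \<subseteq> W"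
    "F \<subseteq> (\<Union>b\<in>I. fst b \<times> snd b)"
proof -
  define Boxes where "Boxes = {(A, B). open A \<and> open B \<and> A \<noteq> {} \<and> B \<noteq> {} \<and> A \<times> B \<subseteq> W}"
  have box: "\<exists>b\<in>Boxes. p \<in> fst b \<times> snd b" if p: "p \<in> W" for p
  proof -
    obtain A B where AB: "open A" "open B" "p \<in> A \<times> B" "A \<times> B \<subseteq> W"
      using open_prod_elim[OF assms(2) p] by metis
    then have "(A, B) \<in> Boxes"
      unfolding Boxes_def by auto
    then show ?thesis
      using AB(3) by force
  qed
  have Boxes: "open (fst b) \<and> open (snd b) \<and> fst b \<noteq> {} \<and> snd b \<noteq> {} \<and> fst b \<times> snd b \<subseteq> W"
    if "b \<in> Boxes" for b
    using that unfolding Boxes_def by (cases b) simp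
  have "open (fst b \<times> snd b)" if "b \<in> Boxes" for b
    using Boxes[OF that] by (simp add: open_Times)
  moreover have "F \<subseteq> (\<Union>b\<in>Boxes. fst b \<times> snd b)"
  proof
    fix p assume "p \<in> F"
    then obtain b where "b \<in> Boxes" "p \<in> fst b \<times> snd b"
      using box assms(3) by (meson subsetD)
    then show "p \<in> (\<Union>b\<in>Boxes. fst b \<times> snd b)"
      by (rule UN_I)
  qed
  ultimately obtain I where I: "I \<subseteq> Boxes" "finite I" "F \<subseteq> (\<Union>b\<in>I. fst b \<times> snd b)"
    by (rule compactE_image[OF assms(1)])
  obtain p where "p \<in> W"
    using assms(4) by blast
  then obtain b0 where "b0 \<in> Boxes"
    using box by blast
  show ?thesis
  proof (rule that[of "insert b0 I"])
    fix b assume "b \<in> insert b0 I"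
    then have "b \<in> Boxes"
      using I(1) \<open>b0 \<in> Boxes\<close> by blast
    then show "open (fst b) \<and> open (snd b) \<and> fst b \<noteq> {} \<and> snd b \<noteq> {} \<and> fst b \<times> snd b \<subseteq> W"
      by (rule Boxes)
  next
    show "F \<subseteq> (\<Union>b\<in>insert b0 I. fst b \<times> snd b)"
      using I(3) by blast
  qed (use I(2) in auto)
qed

lemma two_disjoint_box_families:
  fixes W :: "('a::t2_space \<times> 'b::topological_space) set"
  assumes "\<And>x::'a. \<not> open {x}" "compact F" "open W" "F \<subseteq> W" "W \<noteq> {}"
  obtains I :: "('a set \<times> 'b set) set" and B C where "finite I"
    "\<And>i. i \<in> I \<Longrightarrow> open (B i)" "F \<subseteq> UNIV \<times> (\<Union>i\<in>I. B i)"
    "\<And>t i. i \<in> I \<Longrightarrow> open (C t i) \<and> C t i \<noteq> {}" "\<And>t. disjoint_family_on (C t) I"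
    "\<And>t. (\<Union>i\<in>I. C t i \<times> B i) \<noteq> {}" "\<And>t. (\<Union>i\<in>I. C t i \<times> B i) \<subseteq> W"
    "(\<Union>i\<in>I. C True i \<times> B i) \<inter> (\<Union>i\<in>I. C False i \<times> B i) = {}"
proof -
  obtain I where I: "finite I" "I \<noteq> {}"
    "\<And>b. b \<in> I \<Longrightarrow> open (fst b) \<and> open (snd b) \<and> fst b \<noteq> {} \<and> snd b \<noteq> {} \<and> fst b \<times> snd b \<subseteq> W"
    "F \<subseteq> (\<Union>b\<in>I. fst b \<times> snd b)"
    using compact_cover_by_open_boxes assms(2-5) by blast
  obtain C :: "('a set \<times> 'b set) \<times> bool \<Rightarrow> 'a set" where
    C: "\<And>i. i \<in> I \<times> UNIV \<Longrightarrow> open (C i) \<and> C i \<noteq> {} \<and> C i \<subseteq> fst (fst i)"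
      "disjoint_family_on C (I \<times> UNIV)"
    by (rule disjoint_open_subsets[OF assms(1), of "I \<times> UNIV" "\<lambda>i. fst (fst i)"]) (use I(1,3) in auto)
  show ?thesis
  proof (rule that[of I snd "\<lambda>t b. C (b, t)"])
    show "F \<subseteq> UNIV \<times> (\<Union>b\<in>I. snd b)"
      using I(4) by auto
    show "disjoint_family_on (\<lambda>b. C (b, t)) I" for t
      using C(2) by (auto simp: disjoint_family_on_def)
    have "C (b, t) \<times> snd b \<subseteq> W" if "b \<in> I" for b t
      using I(3)[OF that] C(1)[of "(b, t)"] that by auto
    then show "(\<Union>b\<in>I. C (b, t) \<times> snd b) \<subseteq> W" for t
      by (rule UN_least)
    have disjoint: "C (b, True) \<times> snd b \<inter> C (b', False) \<times> snd b' = {}" if "b \<in> I" "b' \<in> I" for b b'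
    proof -
      have "C (b, True) \<inter> C (b', False) = {}"
        using C(2) that unfolding disjoint_family_on_def by blast
      then show ?thesis
        by blast
    qed
    show "(\<Union>b\<in>I. C (b, True) \<times> snd b) \<inter> (\<Union>b\<in>I. C (b, False) \<times> snd b) = {}"
      using disjoint by blast
    show "(\<Union>b\<in>I. C (b, t) \<times> snd b) \<noteq> {}" for t
    proof -
      obtain b where "b \<in> I"
        using I(2) by blast
      moreover have "C (b, t) \<times> snd b \<noteq> {}"
        using I(3)[OF \<open>b \<in> I\<close>] C(1)[of "(b, t)"] \<open>b \<in> I\<close> by simp
      ultimately show ?thesis
        by auto
    qed
  qed (use I(1,3) C(1) in auto)
qed

theorem proposition5p2:
  fixes \<beta> :: "'g::{group_add, countable} \<Rightarrow> 'x::t2_space \<Rightarrow> 'x"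
    and \<alpha> :: "'g \<Rightarrow> 'x \<times> 'y::t2_space \<Rightarrow> 'x \<times> 'y"
  assumes "infinite (UNIV :: 'g set)"
    and "compact (UNIV :: 'x set)" and "infinite (UNIV :: 'x set)"
    and "compact (UNIV :: 'y set)"
    and "continuous_action \<beta>"
    and "minimal_action \<beta>"
    and "topologically_free \<beta>"
    and "\<nexists>M. inv_reg_prob \<beta> M"
    and "dynamical_comparison \<beta>"
    and "\<And>g x y. \<alpha> g (x, y) = (\<beta> g x, y)"
  shows "paradoxical_comparison \<alpha>"
proof (unfold paradoxical_comparison_def, intro allI impI, elim conjE)
  fix W :: "('x \<times> 'y) set" and F
  assume W: "open W" "W \<noteq> {}" and F: "closed F" "F \<subseteq> W"
  have "compact F"
    using closed_Int_compact[OF F(1) compact_Times[OF assms(2,4)]] by simp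
  obtain I :: "('x set \<times> 'y set) set" and B and C :: "bool \<Rightarrow> 'x set \<times> 'y set \<Rightarrow> 'x set"
    where I: "finite I"
      "\<And>i. i \<in> I \<Longrightarrow> open (B i)" "F \<subseteq> UNIV \<times> (\<Union>i\<in>I. B i)"
      "\<And>t i. i \<in> I \<Longrightarrow> open (C t i) \<and> C t i \<noteq> {}" "\<And>t. disjoint_family_on (C t) I"
      "\<And>t. (\<Union>i\<in>I. C t i \<times> B i) \<noteq> {}" "\<And>t. (\<Union>i\<in>I. C t i \<times> B i) \<subseteq> W"
      "(\<Union>i\<in>I. C True i \<times> B i) \<inter> (\<Union>i\<in>I. C False i \<times> B i) = {}"
    by (rule two_disjoint_box_families[OF minimal_action_no_isolated_points[OF assms(2,3,5,6)]
          \<open>compact F\<close> W(1) F(2) W(2)]) (rule that)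
  define V where "V t = (\<Union>i\<in>I. C t i \<times> B i)" for t
  have subeq: "subeq_closed \<alpha> F (V t)" for t
    unfolding V_def
    by (rule subeq_closed_UN_Times[OF assms(10) I(1) _ I(2,5,3)])
      (use I(4) subeq_closed_UNIV_if_no_invariant_measure[OF assms(9,8)] in blast)
  have V_open: "open (V t)" for t
    unfolding V_def using I(2,4) by (intro open_UN ballI open_Times) auto
  show "\<exists>W1 W2. open W1 \<and> open W2 \<and> W1 \<noteq> {} \<and> W2 \<noteq> {} \<and> W1 \<subseteq> W \<and> W2 \<subseteq> W \<and>
      W1 \<inter> W2 = {} \<and> subeq_closed \<alpha> F W1 \<and> subeq_closed \<alpha> F W2"
    by (intro exI[of _ "V True"] exI[of _ "V False"]) (simp add: subeq V_open I(6-8)[folded V_def])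
qed

end
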